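(* Let $G=(V,E)$ be a directed graph with an extraction order $G^{\mathcal X}=(V,E^{\mathcal X},s)$. Suppose a node $v\in V$ separates a set of nodes $U\subset V$ from the root $s$, i.e., every path in the underlying undirected graph of $G$ from $s$ to a node of $U$ passes through $v$. Then every edge incident to $v$ and to some node $u\in U$ is oriented away from $v$ in the extraction order, i.e., it appears as $(v,u)\in E^{\mathcal X}$.
   Context: An extraction order of a directed graph $G=(V,E)$ is a rooted directed graph $G^{\mathcal X}=(V,E^{\mathcal X},s)$ with root $s\in V$ such that $G^{\mathcal X}$ is acyclic, every node is reachable from $s$, and $E^{\mathcal X}$ is obtained from $E$ by reversing the orientation of some (possibly no) edges. *)

theory Defs
  imports Main
begin

definition extraction_order ::
  "'a set \<Rightarrow> ('a \<times> 'a) set \<Rightarrow> ('a \<times> 'a) set \<Rightarrow> 'a \<Rightarrow> bool" where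
  "extraction_order V E EX_ord s \<longleftrightarrow>
     s \<in> V \<and>
     (\<exists>R \<subseteq> E. EX_ord = (E - R) \<union> R\<inverse>) \<and>
     acyclic EX_ord \<and>
     (\<forall>x\<in>V. (s, x) \<in> EX_ord\<^sup>*)"

definition undirected_path :: "'a set \<Rightarrow> ('a \<times> 'a) set \<Rightarrow> 'a list \<Rightarrow> 'a \<Rightarrow> 'a \<Rightarrow> bool" where
  "undirected_path V E xs a b \<longleftrightarrow>
     xs \<noteq> [] \<and> hd xs = a \<and> last xs = b \<and> set xs \<subseteq> V \<and>
     (\<forall>i. Suc i < length xs \<longrightarrow> (xs ! i, xs ! Suc i) \<in> E \<union> E\<inverse>)"

definition separates :: "'a set \<Rightarrow> ('a \<times> 'a) set \<Rightarrow> 'a \<Rightarrow> 'a set \<Rightarrow> 'a \<Rightarrow> bool" where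
  "separates V E v U s \<longleftrightarrow>
     (\<forall>u\<in>U. \<forall>xs. undirected_path V E xs s u \<longrightarrow> v \<in> set xs)"

end

theory Submission
  imports Defs
begin

text \<open>Every u \<in> U is reachable from s in the extraction order. Reading such a directed path
  as an undirected path of G, it passes through v, so v reaches u in the extraction order.
  An edge between v and u oriented as (u, v) would then close a cycle.\<close>

lemma undirected_path_snoc:
  assumes "undirected_path V E xs a b" "(b, c) \<in> E \<union> E\<inverse>" "c \<in> V"
  shows "undirected_path V E (xs @ [c]) a c"
  unfolding undirected_path_def
proof (intro conjI allI impI)
  have ne: "xs \<noteq> []" and lst: "last xs = b" using assms(1) by (auto simp: undirected_path_def)
  show "hd (xs @ [c]) = a" using assms(1) ne by (simp add: undirected_path_def)
  show "set (xs @ [c]) \<subseteq> V" using assms(1,3) by (auto simp: undirected_path_def)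
  fix i assume i: "Suc i < length (xs @ [c])"
  show "((xs @ [c]) ! i, (xs @ [c]) ! Suc i) \<in> E \<union> E\<inverse>"
  proof (cases "Suc i < length xs")
    case True
    then show ?thesis using assms(1) by (simp add: undirected_path_def nth_append)
  next
    case False
    with i have "i = length xs - 1" "Suc i = length xs" by auto
    then have "(xs @ [c]) ! i = b" "(xs @ [c]) ! Suc i = c"
      using ne lst by (auto simp: nth_append last_conv_nth)
    then show ?thesis using assms(2) by simp
  qed
qed simp_all

lemma rtrancl_imp_undirected_path:
  assumes "(a, b) \<in> r\<^sup>*" "r \<subseteq> E \<union> E\<inverse>" "E \<subseteq> V \<times> V" "a \<in> V"
  shows "\<exists>xs. undirected_path V E xs a b \<and> (\<forall>x\<in>set xs. (x, b) \<in> r\<^sup>*)"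
  using assms(1)
proof (induction rule: rtrancl_induct)
  case base
  show ?case using assms(4) by (auto simp: undirected_path_def intro!: exI[of _ "[a]"])
next
  case (step y z)
  then obtain xs where path: "undirected_path V E xs a y" and reach: "\<forall>x\<in>set xs. (x, y) \<in> r\<^sup>*"
    by blast
  have yz: "(y, z) \<in> E \<union> E\<inverse>" using step.hyps(2) assms(2) by blast
  then have "z \<in> V" using assms(3) by blast
  with path yz have "undirected_path V E (xs @ [z]) a z" by (rule undirected_path_snoc)
  moreover have "\<forall>x\<in>set (xs @ [z]). (x, z) \<in> r\<^sup>*"
    using reach step.hyps(2) by (auto intro: rtrancl_into_rtrancl)
  ultimately show ?case by blast
qed

lemma extraction_order_edge_cases:
  assumes "extraction_order V E EX_ord s" "(x, y) \<in> E"
  shows "(x, y) \<in> EX_ord \<or> (y, x) \<in> EX_ord"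
  using assms unfolding extraction_order_def by blast

lemma extraction_order_subset_undirected:
  assumes "extraction_order V E EX_ord s"
  shows "EX_ord \<subseteq> E \<union> E\<inverse>"
  using assms unfolding extraction_order_def by blast

lemma extraction_order_separator_reaches:
  assumes "E \<subseteq> V \<times> V" "extraction_order V E EX_ord s"
    and "separates V E v U s" "u \<in> U" "u \<in> V"
  shows "(v, u) \<in> EX_ord\<^sup>*"
proof -
  have "s \<in> V" "(s, u) \<in> EX_ord\<^sup>*"
    using assms(2,5) unfolding extraction_order_def by blast+
  then obtain xs where path: "undirected_path V E xs s u" and "\<forall>x\<in>set xs. (x, u) \<in> EX_ord\<^sup>*"
    using rtrancl_imp_undirected_path[OF _ extraction_order_subset_undirected[OF assms(2)] assms(1)]
    by blast
  moreover have "v \<in> set xs" using assms(3,4) path unfolding separates_def by blast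
  ultimately show ?thesis by blast
qed

theorem lemma39:
  fixes V :: "'a set" and E EX_ord :: "('a \<times> 'a) set" and s v :: 'a and U :: "'a set"
  assumes "E \<subseteq> V \<times> V"
    and "extraction_order V E EX_ord s"
    and "v \<in> V" and "U \<subseteq> V"
    and "separates V E v U s"
  shows "\<forall>u\<in>U. ((v, u) \<in> E \<or> (u, v) \<in> E) \<longrightarrow> (v, u) \<in> EX_ord"
proof (intro ballI impI)
  fix u assume u: "u \<in> U" and edge: "(v, u) \<in> E \<or> (u, v) \<in> E"
  have "(v, u) \<in> EX_ord \<or> (u, v) \<in> EX_ord"
    using edge extraction_order_edge_cases[OF assms(2)] by blast
  moreover have "(u, v) \<notin> EX_ord"
  proof
    assume "(u, v) \<in> EX_ord"
    moreover have "(v, u) \<in> EX_ord\<^sup>*"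
      using extraction_order_separator_reaches[OF assms(1,2,5) u] u assms(4) by blast
    ultimately have "(v, v) \<in> EX_ord\<^sup>+" by (meson rtrancl_into_trancl1)
    with assms(2) show False unfolding extraction_order_def acyclic_def by blast
  qed
  ultimately show "(v, u) \<in> EX_ord" by blast
qed

end
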